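(* Let $(X,d)$ be a metric space with $|X|\geqslant 3$ and let $T\colon X\to X$ be a generalized Ćirić–Reich–Rus type mapping with constants $\alpha,\lambda\geqslant 0$, $2\alpha+\frac{3\lambda}{2}<1$, i.e. $$d(Tx,Ty)+d(Ty,Tz)+d(Tx,Tz)\leqslant \alpha\big(d(x,y)+d(y,z)+d(z,x)\big)+\lambda\big(d(x,Tx)+d(y,Ty)+d(z,Tz)\big)$$ for all pairwise distinct $x,y,z\in X$. If $x$ is an accumulation point of $X$ and $T$ is continuous at $x$, then $$d(Tx,Ty)\leqslant \alpha\, d(x,y)+\lambda\left(d(x,Tx)+\frac{d(y,Ty)}{2}\right)$$ holds for all $y\in X$. *)

theory Defs
  imports "HOL-Analysis.Analysis"
begin

definition gen_CRR :: "('a::metric_space \<Rightarrow> 'a) \<Rightarrow> real \<Rightarrow> real \<Rightarrow> bool" where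
  "gen_CRR T alpha lam \<longleftrightarrow> alpha \<ge> 0 \<and> lam \<ge> 0 \<and> 2 * alpha + 3 * lam / 2 < 1 \<and>
     (\<forall>x y z. x \<noteq> y \<and> y \<noteq> z \<and> x \<noteq> z \<longrightarrow>
        dist (T x) (T y) + dist (T y) (T z) + dist (T x) (T z)
          \<le> alpha * (dist x y + dist y z + dist z x) + lam * (dist x (T x) + dist y (T y) + dist z (T z)))"

end

theory Submission
  imports Defs
begin

lemma isCont_le_at_islimpt:
  fixes f g :: "'a::t2_space \<Rightarrow> 'b::linorder_topology"
  assumes "x islimpt UNIV" and "isCont f x" and "isCont g x"
    and "\<forall>\<^sub>F z in at x. f z \<le> g z"
  shows "f x \<le> g x"
proof -
  have "at x \<noteq> bot"
    using assms(1) trivial_limit_within by blast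
  then show ?thesis
    using tendsto_le assms(2-4) unfolding isCont_def by blast
qed

lemma gen_CRR_dist_le:
  assumes "gen_CRR T alpha lam" and "x \<noteq> y" and "y \<noteq> z" and "x \<noteq> z"
  shows "dist (T x) (T y) + dist (T y) (T z) + dist (T x) (T z)
    \<le> alpha * (dist x y + dist y z + dist z x) + lam * (dist x (T x) + dist y (T y) + dist z (T z))"
  using assms unfolding gen_CRR_def by blast

text \<open>Let the third point z of the defining inequality tend to x, which is possible
  because x is an accumulation point and T is continuous at x.\<close>
lemma gen_CRR_dist_le_at_islimpt:
  assumes "gen_CRR T alpha lam" and "x islimpt UNIV" and "isCont T x" and "y \<noteq> x"
  shows "2 * dist (T x) (T y) \<le> 2 * alpha * dist x y + lam * (2 * dist x (T x) + dist y (T y))"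
proof -
  have "\<forall>\<^sub>F z in at x. z \<noteq> y \<and> z \<noteq> x"
    by (intro eventually_conj eventually_neq_at_within)
  then have CRR_ineq_near_x: "\<forall>\<^sub>F z in at x.
      dist (T x) (T y) + dist (T y) (T z) + dist (T x) (T z)
        \<le> alpha * (dist x y + dist y z + dist z x) + lam * (dist x (T x) + dist y (T y) + dist z (T z))"
    by eventually_elim (metis gen_CRR_dist_le assms(1,4))
  have "dist (T x) (T y) + dist (T y) (T x) + dist (T x) (T x)
      \<le> alpha * (dist x y + dist y x + dist x x) + lam * (dist x (T x) + dist y (T y) + dist x (T x))"
    by (rule isCont_le_at_islimpt[OF assms(2) _ _ CRR_ineq_near_x])
      (use assms(3) in \<open>auto intro!: continuous_intros\<close>)+
  then show ?thesis
    by (simp add: dist_commute algebra_simps)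
qed

theorem proposition2p5:
  fixes T :: "'a::metric_space \<Rightarrow> 'a" and alpha lam :: real and x :: 'a
  assumes "infinite (UNIV :: 'a set) \<or> card (UNIV :: 'a set) \<ge> 3"
    and "gen_CRR T alpha lam"
    and "x islimpt (UNIV :: 'a set)"
    and "isCont T x"
  shows "\<forall>y. dist (T x) (T y) \<le> alpha * dist x y + lam * (dist x (T x) + dist y (T y) / 2)"
proof
  fix y
  show "dist (T x) (T y) \<le> alpha * dist x y + lam * (dist x (T x) + dist y (T y) / 2)"
  proof (cases "y = x")
    case True
    have "alpha \<ge> 0" and "lam \<ge> 0"
      using assms(2) unfolding gen_CRR_def by auto
    with True show ?thesis by simp
  next
    case False
    with gen_CRR_dist_le_at_islimpt[OF assms(2-4)] show ?thesis
      by (simp add: field_simps)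
  qed
qed

end
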